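(* Let $(H,u_1u_2u_3)$ be a lucky tracker of a graph $G$ and let $S$ be a full star-cutset of $H$. Then at least one of the following holds. (B1) For each $u_1u_2u_3$-hole $C$ of $H$, there exists a connected component $B$ of $H\setminus S$ such that $C$ is a subgraph of $H[V(B)\cup S]$. (B2) There are two non-adjacent nodes $s_1,s_2$ of $S$ and two connected components $B_1,B_2$ of $H\setminus S$ with $\{s_1,s_2\}\subseteq N_H(B_1)$ and $\{s_1,s_2\}\subseteq N_H(B_2)$.
   Context: All graphs are finite, simple and undirected. For a subgraph $B$ of $H$, $N_H(B)$ is the set of nodes outside $V(B)$ adjacent to some node of $B$. A hole is an induced simple cycle with at least four nodes; it is even if it has an even number of nodes. A shortest even hole of $H$ is an even hole of $H$ with the minimum number of nodes. For a hole $C$ of $H$ and $x\in V(H)\setminus V(C)$, let $N_C(x)=N_H(x)\cap V(C)$; $x$ is a major node if $N_C(x)$ contains three distinct pairwise non-adjacent nodes; $M_H(C)$ is the set of major nodes. $N_H^{2,2}(C)$ is the set of non-major nodes $x$ adjacent to $C$ such that $C[N_C(x)]$ has exactly two connected components, each with two nodes. $C$ is clean in $H$ if $M_H(C)=N_H^{2,2}(C)=\varnothing$. A tracker of $G$ is a pair $(H,u_1u_2u_3)$ where $H$ is an induced subgraph of $G$ and $u_1u_2u_3$ is a path on three nodes of $H$. A $u_1u_2u_3$-hole of $H$ is a clean shortest even hole $C$ of $H$ such that $u_1u_2u_3$ is a path of $C$; the tracker is lucky if $H$ has a $u_1u_2u_3$-hole. A subset $S\subseteq V(H)$ is a star-cutset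 of $H$ if $S\subseteq N_H[s]$ for some $s\in S$ (closed neighborhood) and $H\setminus S$ has more connected components than $H$; it is a full star-cutset if moreover $S=N_H[s]$ for some $s\in S$. *)

theory Defs
  imports Main
begin

(* Graphs: a vertex set V with an edge relation E (assumed symmetric and irreflexive
   where used). The subgraph considered is always the one induced on V. *)

definition adj_in :: "('a \<Rightarrow> 'a \<Rightarrow> bool) \<Rightarrow> 'a set \<Rightarrow> 'a \<Rightarrow> 'a \<Rightarrow> bool" where
  "adj_in E V x y \<longleftrightarrow> x \<in> V \<and> y \<in> V \<and> E x y"

definition components :: "('a \<Rightarrow> 'a \<Rightarrow> bool) \<Rightarrow> 'a set \<Rightarrow> 'a set set" where
  "components E V = {{y. (adj_in E V)\<^sup>*\<^sup>* x y} | x. x \<in> V}"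

definition nbhd :: "('a \<Rightarrow> 'a \<Rightarrow> bool) \<Rightarrow> 'a set \<Rightarrow> 'a set \<Rightarrow> 'a set" where
  "nbhd E V B = {v \<in> V - B. \<exists>b\<in>B. E v b}"

definition cnbhd :: "('a \<Rightarrow> 'a \<Rightarrow> bool) \<Rightarrow> 'a set \<Rightarrow> 'a \<Rightarrow> 'a set" where
  "cnbhd E V s = insert s {v \<in> V. E s v}"

definition is_hole :: "('a \<Rightarrow> 'a \<Rightarrow> bool) \<Rightarrow> 'a set \<Rightarrow> 'a list \<Rightarrow> bool" where
  "is_hole E V C \<longleftrightarrow> length C \<ge> 4 \<and> distinct C \<and> set C \<subseteq> V \<and>
     (\<forall>i<length C. \<forall>j<length C.
        E (C ! i) (C ! j) \<longleftrightarrow> (j = Suc i mod length C \<or> i = Suc j mod length C))"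

definition is_even_hole :: "('a \<Rightarrow> 'a \<Rightarrow> bool) \<Rightarrow> 'a set \<Rightarrow> 'a list \<Rightarrow> bool" where
  "is_even_hole E V C \<longleftrightarrow> is_hole E V C \<and> even (length C)"

definition is_shortest_even_hole :: "('a \<Rightarrow> 'a \<Rightarrow> bool) \<Rightarrow> 'a set \<Rightarrow> 'a list \<Rightarrow> bool" where
  "is_shortest_even_hole E V C \<longleftrightarrow> is_even_hole E V C \<and>
     (\<forall>D. is_even_hole E V D \<longrightarrow> length C \<le> length D)"

definition nbr_on :: "('a \<Rightarrow> 'a \<Rightarrow> bool) \<Rightarrow> 'a list \<Rightarrow> 'a \<Rightarrow> 'a set" where
  "nbr_on E C x = {c \<in> set C. E x c}"

definition is_major :: "('a \<Rightarrow> 'a \<Rightarrow> bool) \<Rightarrow> 'a set \<Rightarrow> 'a list \<Rightarrow> 'a \<Rightarrow> bool" where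
  "is_major E V C x \<longleftrightarrow> x \<in> V - set C \<and>
     (\<exists>a\<in>nbr_on E C x. \<exists>b\<in>nbr_on E C x. \<exists>c\<in>nbr_on E C x.
        a \<noteq> b \<and> a \<noteq> c \<and> b \<noteq> c \<and> \<not> E a b \<and> \<not> E a c \<and> \<not> E b c)"

definition is_22 :: "('a \<Rightarrow> 'a \<Rightarrow> bool) \<Rightarrow> 'a set \<Rightarrow> 'a list \<Rightarrow> 'a \<Rightarrow> bool" where
  "is_22 E V C x \<longleftrightarrow> x \<in> V - set C \<and> \<not> is_major E V C x \<and> nbr_on E C x \<noteq> {} \<and>
     card (components E (nbr_on E C x)) = 2 \<and>
     (\<forall>B\<in>components E (nbr_on E C x). card B = 2)"

definition is_clean :: "('a \<Rightarrow> 'a \<Rightarrow> bool) \<Rightarrow> 'a set \<Rightarrow> 'a list \<Rightarrow> bool" where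
  "is_clean E V C \<longleftrightarrow> (\<forall>x. \<not> is_major E V C x) \<and> (\<forall>x. \<not> is_22 E V C x)"

definition path3_of_cycle :: "'a list \<Rightarrow> 'a \<Rightarrow> 'a \<Rightarrow> 'a \<Rightarrow> bool" where
  "path3_of_cycle C u1 u2 u3 \<longleftrightarrow> (\<exists>i<length C.
     (C ! i = u1 \<and> C ! (Suc i mod length C) = u2 \<and> C ! (Suc (Suc i) mod length C) = u3) \<or>
     (C ! i = u3 \<and> C ! (Suc i mod length C) = u2 \<and> C ! (Suc (Suc i) mod length C) = u1))"

definition is_u_hole :: "('a \<Rightarrow> 'a \<Rightarrow> bool) \<Rightarrow> 'a set \<Rightarrow> 'a \<Rightarrow> 'a \<Rightarrow> 'a \<Rightarrow> 'a list \<Rightarrow> bool" where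
  "is_u_hole E V u1 u2 u3 C \<longleftrightarrow> is_clean E V C \<and> is_shortest_even_hole E V C \<and>
     path3_of_cycle C u1 u2 u3"

definition is_tracker :: "('a \<Rightarrow> 'a \<Rightarrow> bool) \<Rightarrow> 'a set \<Rightarrow> 'a set \<Rightarrow> 'a \<Rightarrow> 'a \<Rightarrow> 'a \<Rightarrow> bool" where
  "is_tracker E VG VH u1 u2 u3 \<longleftrightarrow> VH \<subseteq> VG \<and> u1 \<in> VH \<and> u2 \<in> VH \<and> u3 \<in> VH \<and>
     u1 \<noteq> u2 \<and> u2 \<noteq> u3 \<and> u1 \<noteq> u3 \<and> E u1 u2 \<and> E u2 u3"

definition lucky :: "('a \<Rightarrow> 'a \<Rightarrow> bool) \<Rightarrow> 'a set \<Rightarrow> 'a set \<Rightarrow> 'a \<Rightarrow> 'a \<Rightarrow> 'a \<Rightarrow> bool" where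
  "lucky E VG VH u1 u2 u3 \<longleftrightarrow> is_tracker E VG VH u1 u2 u3 \<and> (\<exists>C. is_u_hole E VH u1 u2 u3 C)"

definition star_cutset :: "('a \<Rightarrow> 'a \<Rightarrow> bool) \<Rightarrow> 'a set \<Rightarrow> 'a set \<Rightarrow> bool" where
  "star_cutset E V S \<longleftrightarrow> S \<subseteq> V \<and> (\<exists>s\<in>S. S \<subseteq> cnbhd E V s) \<and>
     card (components E (V - S)) > card (components E V)"

definition full_star_cutset :: "('a \<Rightarrow> 'a \<Rightarrow> bool) \<Rightarrow> 'a set \<Rightarrow> 'a set \<Rightarrow> bool" where
  "full_star_cutset E V S \<longleftrightarrow> star_cutset E V S \<and> (\<exists>s\<in>S. S = cnbhd E V s)"

end

theory Submission
  imports Defs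
begin

text \<open>Suppose (B2) fails and a \<open>u\<^sub>1u\<^sub>2u\<^sub>3\<close>-hole \<open>C\<close> has two nodes \<open>x\<close>, \<open>y\<close> outside \<open>S = N[s]\<close> that lie
  in different components \<open>B\<^sub>x\<close>, \<open>B\<^sub>y\<close> of \<open>H \ S\<close>. Both \<open>x\<close>-\<open>y\<close> arcs of \<open>C\<close> meet \<open>S\<close>, which forces
  \<open>s \<notin> C\<close>. On each arc the first and the last node of \<open>S\<close> are attached to \<open>B\<^sub>x\<close> and to \<open>B\<^sub>y\<close>
  respectively (or vice versa); since \<open>s\<close> is not major, they coincide or are adjacent. If they
  coincide on both arcs, these two nodes witness (B2). If they are adjacent on exactly one arc,
  \<open>s\<close> together with \<open>C\<close> forms a theta containing an even hole shorter than \<open>C\<close>; if on both, \<open>s\<close>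
  is in \<open>N\<^sup>2\<^sup>,\<^sup>2(C)\<close>. Both contradict \<open>C\<close> being a clean shortest even hole.\<close>

lemma mod_add_left_cancel_nat: "((a::nat) + b) mod n = (a + c) mod n \<longleftrightarrow> b mod n = c mod n"
  by (simp add: nat_mod_eq_iff)

lemma add_mod_eq_Suc_add_mod_iff:
  assumes "i < n" "j < n"
  shows "(r + j) mod n = Suc ((r + i) mod n) mod n \<longleftrightarrow> j = Suc i mod n"
proof -
  have "Suc ((r + i) mod n) mod n = (r + Suc i) mod n" by (simp add: mod_Suc_eq)
  then have "(r + j) mod n = Suc ((r + i) mod n) mod n \<longleftrightarrow> j mod n = Suc i mod n"
    using mod_add_left_cancel_nat by metis
  then show ?thesis using assms by simp
qed

subsection \<open>Holes\<close>

lemma is_hole_rotate: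
  assumes "is_hole E V C" "r < length C"
  shows "is_hole E V (rotate r C)"
proof -
  let ?n = "length C"
  have np: "0 < ?n" using assms unfolding is_hole_def by auto
  have "E (rotate r C ! i) (rotate r C ! j) \<longleftrightarrow> (j = Suc i mod ?n \<or> i = Suc j mod ?n)"
    if "i < ?n" "j < ?n" for i j
  proof -
    have "E (rotate r C ! i) (rotate r C ! j) \<longleftrightarrow> E (C ! ((r + i) mod ?n)) (C ! ((r + j) mod ?n))"
      using that by (simp add: nth_rotate)
    also have "\<dots> \<longleftrightarrow> ((r + j) mod ?n = Suc ((r + i) mod ?n) mod ?n \<or>
                        (r + i) mod ?n = Suc ((r + j) mod ?n) mod ?n)"
      using assms(1) mod_less_divisor[OF np] unfolding is_hole_def by blast
    also have "\<dots> \<longleftrightarrow> (j = Suc i mod ?n \<or> i = Suc j mod ?n)"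
      using add_mod_eq_Suc_add_mod_iff that by metis
    finally show ?thesis .
  qed
  then show ?thesis using assms unfolding is_hole_def by auto
qed

lemma nbr_on_rotate: "nbr_on E (rotate r C) x = nbr_on E C x"
  by (simp add: nbr_on_def)

lemma is_major_rotate: "is_major E V (rotate r C) x = is_major E V C x"
  by (simp add: is_major_def nbr_on_rotate)

lemma is_22_rotate: "is_22 E V (rotate r C) x = is_22 E V C x"
  by (simp add: is_22_def is_major_rotate nbr_on_rotate)

lemma is_hole_arc_closure:
  assumes hole: "is_hole E V D" and n: "n = length D"
    and sym: "\<And>x y. E x y \<Longrightarrow> E y x" and irr: "\<And>x. \<not> E x x"
    and s: "s \<in> V" "s \<notin> set D"
    and m: "3 \<le> m" "m \<le> n - 1"
    and adj: "\<And>k. k < m \<Longrightarrow> E s (D ! ((st + k) mod n)) \<longleftrightarrow> (k = 0 \<or> k = m - 1)"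
  shows "is_hole E V (s # map (\<lambda>k. D ! ((st + k) mod n)) [0..<m])"
proof -
  let ?f = "\<lambda>k. D ! ((st + k) mod n)"
  let ?L = "s # map ?f [0..<m]"
  have n4: "n \<ge> 4" and dD: "distinct D" and DV: "set D \<subseteq> V"
    and hadj: "\<And>i j. i < n \<Longrightarrow> j < n \<Longrightarrow> E (D ! i) (D ! j) \<longleftrightarrow> (j = Suc i mod n \<or> i = Suc j mod n)"
    using hole n unfolding is_hole_def by auto
  have np: "n > 0" using n4 by simp
  have inj: "inj_on ?f {0..<m}"
  proof (rule inj_onI)
    fix x y assume xy: "x \<in> {0..<m}" "y \<in> {0..<m}" "?f x = ?f y"
    then have "(st + x) mod n = (st + y) mod n"
      using dD n np by (simp add: nth_eq_iff_index_eq)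
    then have "x mod n = y mod n" using mod_add_left_cancel_nat by metis
    then show "x = y" using xy m by simp
  qed
  have fin: "?f k \<in> set D" for k using n np by simp
  have dist: "distinct ?L" using inj s(2) fin by (auto simp: distinct_map)
  have setL: "set ?L \<subseteq> V" using s(1) fin DV by auto
  have arc: "E (?f k1) (?f k2) \<longleftrightarrow> (k2 = Suc k1 \<or> k1 = Suc k2)" if "k1 < m" "k2 < m" for k1 k2
  proof -
    have "E (?f k1) (?f k2) \<longleftrightarrow> ((st + k2) mod n = Suc ((st + k1) mod n) mod n \<or>
                                 (st + k1) mod n = Suc ((st + k2) mod n) mod n)"
      using hadj np by simp
    also have "\<dots> \<longleftrightarrow> (k2 = Suc k1 mod n \<or> k1 = Suc k2 mod n)"
      using add_mod_eq_Suc_add_mod_iff[of k1 n k2 st] add_mod_eq_Suc_add_mod_iff[of k2 n k1 st] that m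
      by auto
    also have "\<dots> \<longleftrightarrow> (k2 = Suc k1 \<or> k1 = Suc k2)" using that m by auto
    finally show ?thesis .
  qed
  have ends: "(Suc k = Suc 0 mod (m + 1) \<or> 0 = Suc (Suc k) mod (m + 1)) \<longleftrightarrow> (k = 0 \<or> k = m - 1)"
    if "k < m" for k
    using that m by (auto simp: mod_Suc)
  have "E (?L ! i) (?L ! j) \<longleftrightarrow> (j = Suc i mod (m + 1) \<or> i = Suc j mod (m + 1))"
    if "i < m + 1" "j < m + 1" for i j
  proof (cases i; cases j)
    assume "i = 0" "j = 0"
    then show ?thesis using irr m by simp
  next
    fix k assume "i = 0" "j = Suc k"
    then show ?thesis using adj[of k] ends[of k] that by simp
  next
    fix k assume "i = Suc k" "j = 0"
    then show ?thesis using adj[of k] ends[of k] that sym by auto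
  next
    fix k1 k2 assume "i = Suc k1" "j = Suc k2"
    then show ?thesis using arc[of k1 k2] that by (auto simp: mod_Suc)
  qed
  then show ?thesis unfolding is_hole_def using dist setL m by auto
qed

text \<open>A node seeing exactly the edge \<open>(n - 1, 0)\<close> and the node \<open>d\<close> of an even hole of length \<open>n\<close> closes
  two holes with the arcs between its neighbours, of lengths \<open>d + 2\<close> and \<open>n - d + 1\<close>: both are
  shorter than \<open>n\<close>, and exactly one of them is even.\<close>

lemma shortest_even_hole_no_edge_node_attachment_at_0:
  assumes hole: "is_hole E V D" and n: "n = length D" and ev: "even n"
    and short: "\<forall>D'. is_even_hole E V D' \<longrightarrow> n \<le> length D'"
    and sym: "\<And>x y. E x y \<Longrightarrow> E y x" and irr: "\<And>x. \<not> E x x"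
    and s: "s \<in> V" "s \<notin> set D"
    and d: "2 \<le> d" "d \<le> n - 3"
    and adjs: "\<And>k. k < n \<Longrightarrow> E s (D ! k) \<longleftrightarrow> (k = 0 \<or> k = d \<or> k = n - 1)"
  shows False
proof -
  have h1: "is_hole E V (s # map (\<lambda>k. D ! ((0 + k) mod n)) [0..<d + 1])"
    by (rule is_hole_arc_closure[OF hole n sym irr s]) (use d adjs in auto)
  have h2: "is_hole E V (s # map (\<lambda>k. D ! ((d + k) mod n)) [0..<n - d])"
    by (rule is_hole_arc_closure[OF hole n sym irr s]) (use d adjs in auto)
  have "even (d + 2) \<or> even (n - d + 1)" using ev d by auto
  then show False
  proof
    assume "even (d + 2)"
    then show False using h1 short d by (fastforce simp: is_even_hole_def)
  next
    assume "even (n - d + 1)"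
    then show False using h2 short d by (fastforce simp: is_even_hole_def Suc_diff_le)
  qed
qed

lemma shortest_even_hole_no_edge_node_attachment:
  assumes hole: "is_hole E V D" and n: "n = length D" and ev: "even n"
    and short: "\<forall>D'. is_even_hole E V D' \<longrightarrow> n \<le> length D'"
    and sym: "\<And>x y. E x y \<Longrightarrow> E y x" and irr: "\<And>x. \<not> E x x"
    and s: "s \<in> V" "s \<notin> set D"
    and r: "r < n" and d: "2 \<le> d" "d \<le> n - 3"
    and adjs: "\<And>k. k < n \<Longrightarrow> E s (D ! k) \<longleftrightarrow> (k = (r + (n - 1)) mod n \<or> k = r \<or> k = (r + d) mod n)"
  shows False
proof (rule shortest_even_hole_no_edge_node_attachment_at_0[where D = "rotate r D" and n = n and d = d])
  let ?D = "rotate r D"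
  show "is_hole E V ?D" using is_hole_rotate hole r n by blast
  show "n = length ?D" "s \<notin> set ?D" using n s by auto
  fix k assume k: "k < n"
  have rk: "(r + k) mod n = (r + i) mod n \<longleftrightarrow> k = i" if "i < n" for i
    using mod_add_left_cancel_nat[of r k n i] k that by simp
  have "E s (?D ! k) \<longleftrightarrow> E s (D ! ((r + k) mod n))" using k n by (simp add: nth_rotate)
  also have "\<dots> \<longleftrightarrow> (k = n - 1 \<or> k = 0 \<or> k = d)"
    using adjs[of "(r + k) mod n"] rk[of "n - 1"] rk[of 0] rk[of d] r d k by auto
  finally show "E s (?D ! k) \<longleftrightarrow> (k = 0 \<or> k = d \<or> k = n - 1)" by blast
qed (use assms in auto)

subsection \<open>Reachability and components\<close>

lemma adj_in_rtranclp_mem: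
  assumes "(adj_in E W)\<^sup>*\<^sup>* x z" "x \<in> W" shows "z \<in> W"
  using assms by (induction rule: rtranclp_induct) (auto simp: adj_in_def)

lemma adj_in_rtranclp_sym:
  assumes "\<And>x y. E x y \<Longrightarrow> E y x" "(adj_in E W)\<^sup>*\<^sup>* x z" shows "(adj_in E W)\<^sup>*\<^sup>* z x"
proof -
  have "symp (adj_in E W)" using assms(1) by (auto simp: symp_def adj_in_def)
  then have "symp ((adj_in E W)\<^sup>*\<^sup>*)" by (rule symp_rtranclp)
  then show ?thesis using assms(2) by (auto simp: symp_def)
qed

lemma adj_in_rtranclp_closed:
  assumes "(adj_in E W)\<^sup>*\<^sup>* x z" "x \<in> A" "\<And>u w. u \<in> A \<Longrightarrow> w \<in> W \<Longrightarrow> E u w \<Longrightarrow> w \<in> A"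
  shows "z \<in> A"
  using assms by (induction rule: rtranclp_induct) (auto simp: adj_in_def)

lemma hole_arc_rtranclp:
  assumes hole: "is_hole E V D" and n: "n = length D"
    and ns: "\<And>k. u \<le> k \<Longrightarrow> k \<le> v \<Longrightarrow> D ! k \<notin> S" and uv: "u \<le> v" "v < n"
  shows "(adj_in E (V - S))\<^sup>*\<^sup>* (D ! u) (D ! v)"
  using uv ns
proof (induction v)
  case 0 then show ?case by simp
next
  case (Suc v)
  show ?case
  proof (cases "u = Suc v")
    case True then show ?thesis by simp
  next
    case False
    then have IH: "(adj_in E (V - S))\<^sup>*\<^sup>* (D ! u) (D ! v)" using Suc by auto
    have "E (D ! v) (D ! Suc v)" using hole n Suc.prems unfolding is_hole_def by auto
    moreover have "D ! v \<in> V" "D ! Suc v \<in> V" using hole n Suc.prems unfolding is_hole_def by auto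
    moreover have "D ! v \<notin> S" "D ! Suc v \<notin> S" using Suc.prems False by auto
    ultimately have "adj_in E (V - S) (D ! v) (D ! Suc v)" by (simp add: adj_in_def)
    then show ?thesis using IH by (meson rtranclp.rtrancl_into_rtrancl)
  qed
qed

lemma components_two_separated_edges:
  assumes sym: "\<And>x y. E x y \<Longrightarrow> E y x"
    and N: "N = {p1, p2, q1, q2}" and e: "E p1 p2" "E q1 q2"
    and ne: "\<And>u w. u \<in> {p1, p2} \<Longrightarrow> w \<in> {q1, q2} \<Longrightarrow> \<not> E u w"
  shows "components E N = {{p1, p2}, {q1, q2}}"
proof -
  have cl: "{y. (adj_in E N)\<^sup>*\<^sup>* x y} = A"
    if A: "A = {r1, r2}" "E r1 r2" "x \<in> A" "\<And>u w. u \<in> A \<Longrightarrow> w \<in> N \<Longrightarrow> E u w \<Longrightarrow> w \<in> A"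
      "A \<subseteq> N" for A r1 r2 x
  proof
    show "{y. (adj_in E N)\<^sup>*\<^sup>* x y} \<subseteq> A" using adj_in_rtranclp_closed[of E N x _ A] A by blast
    have "adj_in E N r1 r2" "adj_in E N r2 r1" using A sym by (auto simp: adj_in_def)
    then show "A \<subseteq> {y. (adj_in E N)\<^sup>*\<^sup>* x y}" using A by auto
  qed
  have clP: "{y. (adj_in E N)\<^sup>*\<^sup>* x y} = {p1, p2}" if "x \<in> {p1, p2}" for x
    by (rule cl[of _ p1 p2]) (use that N e ne sym in auto)
  have clQ: "{y. (adj_in E N)\<^sup>*\<^sup>* x y} = {q1, q2}" if "x \<in> {q1, q2}" for x
    by (rule cl[of _ q1 q2]) (use that N e ne sym in \<open>auto\<close>)
  show ?thesis unfolding components_def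
  proof (intro equalityI subsetI)
    fix B assume "B \<in> {{y. (adj_in E N)\<^sup>*\<^sup>* x y} |x. x \<in> N}"
    then obtain x where "x \<in> N" "B = {y. (adj_in E N)\<^sup>*\<^sup>* x y}" by blast
    then show "B \<in> {{p1, p2}, {q1, q2}}" using clP clQ N by auto
  next
    fix B assume "B \<in> {{p1, p2}, {q1, q2}}"
    then show "B \<in> {{y. (adj_in E N)\<^sup>*\<^sup>* x y} |x. x \<in> N}"
      using clP[of p1] clQ[of q1] N by auto
  qed
qed

lemma nbhd_component_if_adjacent:
  assumes "v \<in> S" "S \<subseteq> V" "y \<in> V - S" "(adj_in E (V - S))\<^sup>*\<^sup>* y w" "E v w"
  shows "v \<in> nbhd E V {z. (adj_in E (V - S))\<^sup>*\<^sup>* y z}"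
proof -
  have "v \<notin> {z. (adj_in E (V - S))\<^sup>*\<^sup>* y z}"
    using adj_in_rtranclp_mem[of E "V - S" y v] assms(1,3) by blast
  then show ?thesis unfolding nbhd_def using assms by blast
qed

subsection \<open>A clean shortest even hole split by a star\<close>

definition doubly_attached_pair :: "('a \<Rightarrow> 'a \<Rightarrow> bool) \<Rightarrow> 'a set \<Rightarrow> 'a set \<Rightarrow> bool" where
  "doubly_attached_pair E V S \<longleftrightarrow> (\<exists>s1\<in>S. \<exists>s2\<in>S. s1 \<noteq> s2 \<and> \<not> E s1 s2 \<and>
     (\<exists>B1\<in>components E (V - S). \<exists>B2\<in>components E (V - S). B1 \<noteq> B2 \<and>
        {s1, s2} \<subseteq> nbhd E V B1 \<and> {s1, s2} \<subseteq> nbhd E V B2))"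

locale hole_split_by_star =
  fixes E :: "'a \<Rightarrow> 'a \<Rightarrow> bool" and V :: "'a set" and D :: "'a list" and s :: 'a and j :: nat
  assumes sym: "\<And>x y. E x y \<Longrightarrow> E y x" and irr: "\<And>x. \<not> E x x"
    and hole: "is_hole E V D" and even_length: "even (length D)"
    and shortest: "\<forall>D'. is_even_hole E V D' \<longrightarrow> length D \<le> length D'"
    and not_major: "\<not> is_major E V D s" and not_22: "\<not> is_22 E V D s"
    and s_in: "s \<in> V"
    and j: "0 < j" "j < length D"
    and ends_out: "D ! 0 \<notin> cnbhd E V s" "D ! j \<notin> cnbhd E V s"
    and separated: "\<not> (adj_in E (V - cnbhd E V s))\<^sup>*\<^sup>* (D ! 0) (D ! j)"
begin

abbreviation "S \<equiv> cnbhd E V s"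
abbreviation "n \<equiv> length D"
abbreviation "R \<equiv> (adj_in E (V - S))\<^sup>*\<^sup>*"

lemma n_pos: "0 < n"
  using hole unfolding is_hole_def by auto

lemma nth_in: "k < n \<Longrightarrow> D ! k \<in> V"
  using hole unfolding is_hole_def by auto

lemma nth_eq_iff: "i < n \<Longrightarrow> k < n \<Longrightarrow> D ! i = D ! k \<longleftrightarrow> i = k"
  using hole unfolding is_hole_def by (simp add: nth_eq_iff_index_eq)

lemma adj_iff: "i < n \<Longrightarrow> k < n \<Longrightarrow> E (D ! i) (D ! k) \<longleftrightarrow> (k = Suc i mod n \<or> i = Suc k mod n)"
  using hole unfolding is_hole_def by blast

lemma adj_Suc: "k < n \<Longrightarrow> E (D ! k) (D ! (Suc k mod n))"
  using adj_iff[OF _ mod_less_divisor[OF n_pos]] by blast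

lemma adj_last_first: "E (D ! (n - 1)) (D ! 0)"
  using adj_Suc[of "n - 1"] n_pos by simp

lemma S_subset: "S \<subseteq> V"
  using s_in by (auto simp: cnbhd_def)

lemma s_in_S: "s \<in> S"
  by (simp add: cnbhd_def)

lemma nth_in_S_iff: "k < n \<Longrightarrow> D ! k \<in> S \<longleftrightarrow> D ! k = s \<or> E s (D ! k)"
  using nth_in by (auto simp: cnbhd_def)

lemma R_sym: "R x y \<Longrightarrow> R y x"
  by (rule adj_in_rtranclp_sym[where E = E, OF sym])

lemma across_not_adjacent:
  assumes "0 < k1" "k1 < j" "j < k2" "k2 < n"
  shows "\<not> E (D ! k1) (D ! k2) \<and> D ! k1 \<noteq> D ! k2"
proof -
  have "\<not> (k2 = Suc k1 mod n \<or> k1 = Suc k2 mod n)"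
    using assms by (auto simp: mod_Suc split: if_splits)
  then show ?thesis using adj_iff[of k1 k2] nth_eq_iff[of k1 k2] assms j by auto
qed

definition "hits1 = {k. 0 < k \<and> k < j \<and> D ! k \<in> S}"
definition "hits2 = {k. j < k \<and> k < n \<and> D ! k \<in> S}"

lemma hits1_nonempty: "hits1 \<noteq> {}"
proof
  assume "hits1 = {}"
  then have "D ! k \<notin> S" if "k \<le> j" for k
    using that ends_out unfolding hits1_def by (cases "k = 0 \<or> k = j") (auto simp: le_less)
  then have "R (D ! 0) (D ! j)" using hole_arc_rtranclp[OF hole refl] j by blast
  then show False using separated by simp
qed

lemma hits2_nonempty: "hits2 \<noteq> {}"
proof
  assume "hits2 = {}"
  then have out: "D ! k \<notin> S" if "j \<le> k" "k \<le> n - 1" for k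
    using that ends_out j unfolding hits2_def by (cases "k = j") auto
  then have "R (D ! j) (D ! (n - 1))" using hole_arc_rtranclp[OF hole refl] j by auto
  moreover have "adj_in E (V - S) (D ! (n - 1)) (D ! 0)"
    using adj_last_first out[of "n - 1"] nth_in[OF n_pos] nth_in[of "n - 1"] ends_out n_pos j
    by (simp add: adj_in_def)
  ultimately have "R (D ! j) (D ! 0)" by (meson rtranclp.rtrancl_into_rtrancl)
  then show False using separated R_sym by blast
qed

text \<open>A node of \<open>S\<close> on one arc is in \<open>N[s]\<close>; together with \<open>s\<close> on the other arc it would give an
  edge between the two arcs.\<close>

lemma s_notin_hole: "s \<notin> set D"
proof
  assume "s \<in> set D"
  then obtain t where t: "t < n" "D ! t = s" by (auto simp: in_set_conv_nth)
  have "t \<noteq> 0" "t \<noteq> j" using t ends_out s_in_S by metis+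
  then consider "0 < t" "t < j" | "j < t" by linarith
  then show False
  proof cases
    case 1
    obtain k where "k \<in> hits2" using hits2_nonempty by blast
    then show False using across_not_adjacent[of t k] nth_in_S_iff[of k] 1 t unfolding hits2_def by auto
  next
    case 2
    obtain k where "k \<in> hits1" using hits1_nonempty by blast
    then show False
      using across_not_adjacent[of k t] nth_in_S_iff[of k] sym 2 t j unfolding hits1_def by auto
  qed
qed

lemma adjacent_iff_hits: "k < n \<Longrightarrow> E s (D ! k) \<longleftrightarrow> k \<in> hits1 \<or> k \<in> hits2"
  using nth_in_S_iff[of k] s_notin_hole ends_out unfolding hits1_def hits2_def
  by (cases "k = 0"; cases "k = j") (auto simp: cnbhd_def)

definition "first1 = Min hits1"
definition "last1 = Max hits1"
definition "first2 = Min hits2"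
definition "last2 = Max hits2"

lemma finite_hits: "finite hits1" "finite hits2"
  unfolding hits1_def hits2_def by auto

lemma extremes_in_hits: "first1 \<in> hits1" "last1 \<in> hits1" "first2 \<in> hits2" "last2 \<in> hits2"
  using hits1_nonempty hits2_nonempty finite_hits
  unfolding first1_def last1_def first2_def last2_def by auto

lemma hits1_between: "k \<in> hits1 \<Longrightarrow> first1 \<le> k \<and> k \<le> last1"
  unfolding first1_def last1_def hits1_def by auto

lemma hits2_between: "k \<in> hits2 \<Longrightarrow> first2 \<le> k \<and> k \<le> last2"
  unfolding first2_def last2_def hits2_def by auto

lemma extremes_order: "0 < first1" "first1 \<le> last1" "last1 < j" "j < first2" "first2 \<le> last2" "last2 < n"
  using extremes_in_hits hits1_between hits2_between unfolding hits1_def hits2_def by auto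

lemma extremes_in_S: "D ! first1 \<in> S" "D ! last1 \<in> S" "D ! first2 \<in> S" "D ! last2 \<in> S"
  using extremes_in_hits unfolding hits1_def hits2_def by auto

definition "comp0 = {z. R (D ! 0) z}"
definition "compj = {z. R (D ! j) z}"

lemma ends_in: "D ! 0 \<in> V - S" "D ! j \<in> V - S"
  using nth_in[OF n_pos] nth_in[OF j(2)] ends_out by auto

lemma comps_distinct_components:
  "comp0 \<in> components E (V - S)" "compj \<in> components E (V - S)" "comp0 \<noteq> compj"
  using ends_in separated unfolding comp0_def compj_def components_def by auto

lemma first1_attaches_comp0: "D ! first1 \<in> nbhd E V comp0"
proof -
  have "R (D ! 0) (D ! (first1 - 1))"
  proof (rule hole_arc_rtranclp[OF hole refl])
    fix k assume "0 \<le> k" "k \<le> first1 - 1"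
    moreover from this have "k < j" using extremes_order by linarith
    ultimately show "D ! k \<notin> S"
      using hits1_between[of k] extremes_order ends_out unfolding hits1_def by (cases "k = 0") auto
  qed (use extremes_order j in auto)
  moreover have "E (D ! first1) (D ! (first1 - 1))"
    using adj_Suc[of "first1 - 1"] extremes_order j sym by simp
  ultimately show ?thesis
    unfolding comp0_def by (rule nbhd_component_if_adjacent[OF extremes_in_S(1) S_subset ends_in(1)])
qed

lemma last1_attaches_compj: "D ! last1 \<in> nbhd E V compj"
proof -
  have "R (D ! Suc last1) (D ! j)"
  proof (rule hole_arc_rtranclp[OF hole refl])
    fix k assume "Suc last1 \<le> k" "k \<le> j"
    then show "D ! k \<notin> S"
      using hits1_between[of k] extremes_order ends_out unfolding hits1_def by (cases "k = j") auto
  qed (use extremes_order j in auto)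
  moreover have "E (D ! last1) (D ! Suc last1)"
    using adj_Suc[of last1] extremes_order j by simp
  ultimately show ?thesis
    unfolding compj_def by (rule nbhd_component_if_adjacent[OF extremes_in_S(2) S_subset ends_in(2) R_sym])
qed

lemma first2_attaches_compj: "D ! first2 \<in> nbhd E V compj"
proof -
  have "R (D ! j) (D ! (first2 - 1))"
  proof (rule hole_arc_rtranclp[OF hole refl])
    fix k assume "j \<le> k" "k \<le> first2 - 1"
    moreover from this have "k < n" using extremes_order by linarith
    ultimately show "D ! k \<notin> S"
      using hits2_between[of k] extremes_order ends_out unfolding hits2_def by (cases "k = j") auto
  qed (use extremes_order in auto)
  moreover have "E (D ! first2) (D ! (first2 - 1))"
    using adj_Suc[of "first2 - 1"] extremes_order j sym by simp
  ultimately show ?thesis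
    unfolding compj_def by (rule nbhd_component_if_adjacent[OF extremes_in_S(3) S_subset ends_in(2)])
qed

lemma last2_attaches_comp0: "D ! last2 \<in> nbhd E V comp0"
proof -
  have "R (D ! 0) (D ! (Suc last2 mod n))"
  proof (cases "last2 = n - 1")
    case True
    then show ?thesis using n_pos by simp
  next
    case False
    have out: "D ! k \<notin> S" if "Suc last2 \<le> k" "k \<le> n - 1" for k
    proof -
      have "j < k" "k < n" using that extremes_order n_pos by linarith+
      then show ?thesis using that hits2_between[of k] unfolding hits2_def by auto
    qed
    then have "R (D ! Suc last2) (D ! (n - 1))"
      using hole_arc_rtranclp[OF hole refl] extremes_order False by auto
    moreover have "adj_in E (V - S) (D ! (n - 1)) (D ! 0)"
      using adj_last_first out[of "n - 1"] nth_in[OF n_pos] nth_in[of "n - 1"] ends_out extremes_order False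
      by (simp add: adj_in_def)
    ultimately have "R (D ! Suc last2) (D ! 0)" by (meson rtranclp.rtrancl_into_rtrancl)
    then show ?thesis using R_sym extremes_order False by auto
  qed
  then show ?thesis
    using adj_Suc[of last2] extremes_order unfolding comp0_def
    by (intro nbhd_component_if_adjacent[OF extremes_in_S(4) S_subset ends_in(1)]) auto
qed

lemma no_three_independent_hits:
  assumes "k1 < n" "k2 < n" "k3 < n" "D ! k1 \<in> S" "D ! k2 \<in> S" "D ! k3 \<in> S"
    and "\<not> E (D ! k1) (D ! k2) \<and> D ! k1 \<noteq> D ! k2" "\<not> E (D ! k1) (D ! k3) \<and> D ! k1 \<noteq> D ! k3"
    "\<not> E (D ! k2) (D ! k3) \<and> D ! k2 \<noteq> D ! k3"
  shows False
proof -
  have "D ! k \<in> nbr_on E D s" if "k < n" "D ! k \<in> S" for k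
    using that nth_in_S_iff s_notin_hole by (auto simp: nbr_on_def)
  then have "is_major E V D s"
    using assms s_in s_notin_hole unfolding is_major_def by blast
  then show False using not_major by simp
qed

lemma distant_not_adjacent:
  assumes "Suc k1 < k2" "k2 < n" "\<not> (k1 = 0 \<and> k2 = n - 1)"
  shows "\<not> E (D ! k1) (D ! k2) \<and> D ! k1 \<noteq> D ! k2"
proof -
  have "\<not> (k2 = Suc k1 mod n \<or> k1 = Suc k2 mod n)" using assms by (auto simp: mod_Suc)
  then show ?thesis using adj_iff[of k1 k2] nth_eq_iff[of k1 k2] assms by auto
qed

lemma last1_le_Suc_first1: "last1 \<le> Suc first1"
proof (rule ccontr)
  assume "\<not> ?thesis"
  then show False
    using no_three_independent_hits[of first1 last1 first2] extremes_in_S extremes_order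
      distant_not_adjacent[of first1 last1] across_not_adjacent[of first1 first2]
      across_not_adjacent[of last1 first2]
    by auto
qed

lemma last2_le_Suc_first2: "last2 \<le> Suc first2"
proof (rule ccontr)
  assume "\<not> ?thesis"
  then show False
    using no_three_independent_hits[of first1 first2 last2] extremes_in_S extremes_order
      distant_not_adjacent[of first2 last2] across_not_adjacent[of first1 first2]
      across_not_adjacent[of first1 last2]
    by auto
qed

lemma adjacent_iff_extreme: "k < n \<Longrightarrow> E s (D ! k) \<longleftrightarrow> k = first1 \<or> k = last1 \<or> k = first2 \<or> k = last2"
  using adjacent_iff_hits[of k] hits1_between[of k] hits2_between[of k] extremes_in_hits
    last1_le_Suc_first1 last2_le_Suc_first2
  by (auto simp: le_Suc_eq)

lemma single_hits_doubly_attached: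
  assumes "last1 = first1" "last2 = first2"
  shows "doubly_attached_pair E V S"
  unfolding doubly_attached_pair_def
proof (intro bexI conjI)
  show "D ! first1 \<noteq> D ! first2" "\<not> E (D ! first1) (D ! first2)"
    using across_not_adjacent[of first1 first2] extremes_order by auto
  show "{D ! first1, D ! first2} \<subseteq> nbhd E V comp0" "{D ! first1, D ! first2} \<subseteq> nbhd E V compj"
    using first1_attaches_comp0 last2_attaches_comp0 last1_attaches_compj first2_attaches_compj assms
    by auto
qed (use comps_distinct_components extremes_in_S in auto)

lemma no_edge_hit_on_arc2_only:
  assumes "last1 = first1" "last2 = Suc first2"
  shows False
proof (rule shortest_even_hole_no_edge_node_attachment
    [OF hole refl even_length shortest sym irr s_in s_notin_hole, of last2 "n + first1 - last2"])
  have "(last2 + (n - 1)) mod n = first2" "(last2 + (n + first1 - last2)) mod n = first1"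
    using assms extremes_order by simp_all
  then show "E s (D ! k) \<longleftrightarrow> (k = (last2 + (n - 1)) mod n \<or> k = last2 \<or> k = (last2 + (n + first1 - last2)) mod n)"
    if "k < n" for k
    using adjacent_iff_extreme[OF that] assms by auto
qed (use assms extremes_order in auto)

lemma no_edge_hit_on_arc1_only:
  assumes "last1 = Suc first1" "last2 = first2"
  shows False
proof (rule shortest_even_hole_no_edge_node_attachment
    [OF hole refl even_length shortest sym irr s_in s_notin_hole, of last1 "first2 - last1"])
  have "(last1 + (n - 1)) mod n = first1" "(last1 + (first2 - last1)) mod n = first2"
    using assms extremes_order by simp_all
  then show "E s (D ! k) \<longleftrightarrow> (k = (last1 + (n - 1)) mod n \<or> k = last1 \<or> k = (last1 + (first2 - last1)) mod n)"
    if "k < n" for k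
    using adjacent_iff_extreme[OF that] assms by auto
qed (use assms extremes_order in auto)

lemma no_edge_hits_on_both_arcs:
  assumes "last1 = Suc first1" "last2 = Suc first2"
  shows False
proof -
  let ?P = "{D ! first1, D ! last1}" and ?Q = "{D ! first2, D ! last2}"
  have nbr: "nbr_on E D s = {D ! first1, D ! last1, D ! first2, D ! last2}"
  proof (intro equalityI subsetI)
    fix c assume "c \<in> nbr_on E D s"
    then obtain k where "k < n" "c = D ! k" "E s c" by (auto simp: nbr_on_def in_set_conv_nth)
    then show "c \<in> {D ! first1, D ! last1, D ! first2, D ! last2}" using adjacent_iff_extreme by auto
  next
    have "first1 < n" "last1 < n" "first2 < n" "last2 < n" using extremes_order by linarith+
    then show "c \<in> nbr_on E D s" if "c \<in> {D ! first1, D ! last1, D ! first2, D ! last2}" for c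
      using that adjacent_iff_extreme nth_mem unfolding nbr_on_def by blast
  qed
  have lt: "Suc first1 < n" "Suc first2 < n" using assms extremes_order by linarith+
  have "\<not> E (D ! k1) (D ! k2) \<and> D ! k1 \<noteq> D ! k2" if "k1 \<in> {first1, last1}" "k2 \<in> {first2, last2}" for k1 k2
    using that across_not_adjacent[of k1 k2] extremes_order by auto
  then have across: "\<not> E u w \<and> u \<noteq> w" if "u \<in> ?P" "w \<in> ?Q" for u w
    using that by blast
  have edges: "E (D ! first1) (D ! last1)" "E (D ! first2) (D ! last2)"
    using adj_Suc[of first1] adj_Suc[of first2] assms lt by simp_all
  then have distinct: "D ! first1 \<noteq> D ! last1" "D ! first2 \<noteq> D ! last2" using irr by metis+
  have components: "components E (nbr_on E D s) = {?P, ?Q}"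
  proof (rule components_two_separated_edges[OF sym nbr edges])
    fix u w assume "u \<in> ?P" "w \<in> ?Q"
    then show "\<not> E u w" using across by blast
  qed
  have "card ?P = 2" "card ?Q = 2" using distinct by simp_all
  moreover have "?P \<noteq> ?Q" using across[of "D ! first1"] by blast
  ultimately have "is_22 E V D s"
    using s_in s_notin_hole not_major nbr components unfolding is_22_def by simp
  then show False using not_22 by simp
qed

lemma doubly_attached: "doubly_attached_pair E V S"
  using last1_le_Suc_first1 last2_le_Suc_first2 extremes_order single_hits_doubly_attached
    no_edge_hit_on_arc1_only no_edge_hit_on_arc2_only no_edge_hits_on_both_arcs
  by (metis le_Suc_eq le_antisym)

end

lemma clean_shortest_even_hole_within_component:
  assumes sym: "\<And>x y. E x y \<Longrightarrow> E y x" and irr: "\<And>x. \<not> E x x"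
    and clean: "is_clean E V C" and shortest: "is_shortest_even_hole E V C"
    and s: "s \<in> V" and S: "S = cnbhd E V s" and outside: "V - S \<noteq> {}"
    and no_pair: "\<not> doubly_attached_pair E V S"
  shows "\<exists>B\<in>components E (V - S). set C \<subseteq> B \<union> S"
proof (cases "set C \<subseteq> S")
  case True
  from outside obtain v where "v \<in> V - S" by blast
  then have "{z. (adj_in E (V - S))\<^sup>*\<^sup>* v z} \<in> components E (V - S)" unfolding components_def by blast
  then show ?thesis using True by blast
next
  case False
  then obtain r where r: "r < length C" "C ! r \<notin> S" by (metis in_set_conv_nth subsetI)
  let ?B = "{z. (adj_in E (V - S))\<^sup>*\<^sup>* (C ! r) z}"
  have "C ! r \<in> V" using shortest r(1)
    unfolding is_shortest_even_hole_def is_even_hole_def is_hole_def by auto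
  then have B: "?B \<in> components E (V - S)" using r(2) unfolding components_def by blast
  have "set C \<subseteq> ?B \<union> S"
  proof (rule ccontr)
    assume "\<not> ?thesis"
    then obtain y where y: "y \<in> set C" "y \<notin> S" "\<not> (adj_in E (V - S))\<^sup>*\<^sup>* (C ! r) y" by blast
    let ?D = "rotate r C"
    obtain j where j: "j < length ?D" "?D ! j = y" using y(1) by (metis in_set_conv_nth set_rotate)
    have "C \<noteq> []" using r(1) by auto
    then have D0: "?D ! 0 = C ! r" using nth_rotate[of 0 C r] r(1) by simp
    have "hole_split_by_star E V ?D s j"
    proof unfold_locales
      show "is_hole E V ?D" using is_hole_rotate shortest r(1)
        unfolding is_shortest_even_hole_def is_even_hole_def by blast
      show "even (length ?D)" "\<forall>D'. is_even_hole E V D' \<longrightarrow> length ?D \<le> length D'"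
        using shortest unfolding is_shortest_even_hole_def is_even_hole_def by simp_all
      show "\<not> is_major E V ?D s" "\<not> is_22 E V ?D s"
        using clean unfolding is_clean_def by (simp_all add: is_major_rotate is_22_rotate)
      show "0 < j" using j y(3) D0 by (cases j) auto
      show "?D ! 0 \<notin> cnbhd E V s" "?D ! j \<notin> cnbhd E V s"
        "\<not> (adj_in E (V - cnbhd E V s))\<^sup>*\<^sup>* (?D ! 0) (?D ! j)"
        using D0 r(2) j y S by simp_all
    qed (use sym irr s j in auto)
    then show False using hole_split_by_star.doubly_attached no_pair S by metis
  qed
  then show ?thesis using B by blast
qed

theorem lemma16:
  fixes E :: "'a \<Rightarrow> 'a \<Rightarrow> bool" and VG VH S :: "'a set" and u1 u2 u3 :: 'a
  assumes "finite VG"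
    and "\<And>x y. E x y \<Longrightarrow> E y x"
    and "\<And>x. \<not> E x x"
    and "lucky E VG VH u1 u2 u3"
    and "full_star_cutset E VH S"
  shows "(\<forall>C. is_u_hole E VH u1 u2 u3 C \<longrightarrow>
            (\<exists>B\<in>components E (VH - S). set C \<subseteq> B \<union> S))
       \<or> (\<exists>s1\<in>S. \<exists>s2\<in>S. s1 \<noteq> s2 \<and> \<not> E s1 s2 \<and>
            (\<exists>B1\<in>components E (VH - S). \<exists>B2\<in>components E (VH - S). B1 \<noteq> B2 \<and>
               {s1, s2} \<subseteq> nbhd E VH B1 \<and> {s1, s2} \<subseteq> nbhd E VH B2))"
proof -
  from assms(5) obtain s where s: "s \<in> VH" "S = cnbhd E VH s"
    and more_components: "card (components E (VH - S)) > card (components E VH)"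
    unfolding full_star_cutset_def star_cutset_def by blast
  have "VH - S \<noteq> {}"
  proof
    assume "VH - S = {}"
    then have "components E (VH - S) = {}" unfolding components_def by auto
    then show False using more_components by simp
  qed
  then have "doubly_attached_pair E VH S \<or>
      (\<forall>C. is_u_hole E VH u1 u2 u3 C \<longrightarrow> (\<exists>B\<in>components E (VH - S). set C \<subseteq> B \<union> S))"
    using clean_shortest_even_hole_within_component[OF assms(2,3) _ _ s] unfolding is_u_hole_def by blast
  then show ?thesis unfolding doubly_attached_pair_def by blast
qed

end
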